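(* Let $p$ be an imitation kernel on a finite set $G$ with $G$-stochastic function $P_{(\cdot)}$, and let $R\subset G$ be the union of all closed intercommunicating classes of $P_{(\cdot)}$. Let $p_R$ be the restriction of $p$ to $R$, i.e. the kernel on $R$ given by $p_R(g\mid\mathbf w)=\sum_{k\in\mathcal A}\theta_kP_{(k)}(w_{-k},g)$ for $g\in R$, $\mathbf w\in R^{-\mathbb N_+}$. Then $\mathcal G(p)=\mathcal G(p_R)$, where laws on $R^{\mathbb Z}$ are identified with laws on $G^{\mathbb Z}$ supported by $R^{\mathbb Z}$. In particular every $\mu\in\mathcal G(p)$ satisfies $\mu(R^{\mathbb Z})=1$.
   Context: $G$ finite. An imitation kernel is $p(g\mid\mathbf w)=\sum_{k\in\mathcal A}\theta_kP_{(k)}(w_{-k},g)$, $\mathbf w=(w_{-1},w_{-2},\dots)\in G^{-\mathbb N_+}$, with $\mathcal A\subset\mathbb N_+$, $\theta$ a probability on $\mathcal A$ with $\theta_k>0$ for $k\in\mathcal A$, and stochastic matrices $P_{(k)}$ on $G$; the $G$-stochastic function is $k\mapsto P_{(k)}$. A law of $\mathbf X=(X_n)_{n\in\mathbb Z}$ is compatible with $p$ if $P(X_n=g\mid X_{n-1},X_{n-2},\dots)=p(g\mid X_{n-1},X_{n-2},\dots)$ a.s. for all $n,g$; $\mathcal G(p)$ is the set of compatible laws. Words: $\mathcal A^*=\bigcup_{n\ge1}\mathcal A^n$, $P_{\mathbf a}=P_{(a_n)}\cdots P_{(a_1)}$. $i$ communicates with $j\ne i$ if $P_{\mathbf a}(i,j)>0$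 for some word; intercommunication (including each state with itself) partitions $G$ into classes; a class $C$ is closed if $i\in C$ communicating with $j$ implies $j\in C$ (rows of $P_{(k)}$ indexed by $R$ are then supported in $R$, so $p_R$ is a kernel on $R$). *)

theory Defs
  imports "HOL-Probability.Probability"
begin

text \<open>States: a finite type 'g. A matrix on G is a function 'g => 'g => real.
 Pasts w in G^{-N_+} are encoded as w :: nat => 'g with w k = w_{-k} (k >= 1; w 0 unused).\<close>

definition mmul :: "('g::finite \<Rightarrow> 'g \<Rightarrow> real) \<Rightarrow> ('g \<Rightarrow> 'g \<Rightarrow> real) \<Rightarrow> 'g \<Rightarrow> 'g \<Rightarrow> real" where
  "mmul X Y i j = (\<Sum>s\<in>UNIV. X i s * Y s j)"

text \<open>P_a = P_(a_n) ... P_(a_1) for the word a = [a_1, ..., a_n].\<close>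
fun wprod :: "(nat \<Rightarrow> 'g::finite \<Rightarrow> 'g \<Rightarrow> real) \<Rightarrow> nat list \<Rightarrow> 'g \<Rightarrow> 'g \<Rightarrow> real" where
  "wprod P [] = (\<lambda>i j. if i = j then 1 else 0)"
| "wprod P (a # as) = mmul (wprod P as) (P a)"

definition stochastic :: "('g::finite \<Rightarrow> 'g \<Rightarrow> real) \<Rightarrow> bool" where
  "stochastic Q \<longleftrightarrow> (\<forall>i j. 0 \<le> Q i j) \<and> (\<forall>i. (\<Sum>j\<in>UNIV. Q i j) = 1)"

text \<open>i communicates with j (reflexive convention: each state communicates with itself).\<close>
definition communicates :: "nat set \<Rightarrow> (nat \<Rightarrow> 'g::finite \<Rightarrow> 'g \<Rightarrow> real) \<Rightarrow> 'g \<Rightarrow> 'g \<Rightarrow> bool" where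
  "communicates A P i j \<longleftrightarrow> i = j \<or> (\<exists>as. as \<noteq> [] \<and> set as \<subseteq> A \<and> wprod P as i j > 0)"

definition intercomm :: "nat set \<Rightarrow> (nat \<Rightarrow> 'g::finite \<Rightarrow> 'g \<Rightarrow> real) \<Rightarrow> 'g \<Rightarrow> 'g \<Rightarrow> bool" where
  "intercomm A P i j \<longleftrightarrow> communicates A P i j \<and> communicates A P j i"

definition comm_classes :: "nat set \<Rightarrow> (nat \<Rightarrow> 'g::finite \<Rightarrow> 'g \<Rightarrow> real) \<Rightarrow> 'g set set" where
  "comm_classes A P = range (\<lambda>i. {j. intercomm A P i j})"

definition closed_class :: "nat set \<Rightarrow> (nat \<Rightarrow> 'g::finite \<Rightarrow> 'g \<Rightarrow> real) \<Rightarrow> 'g set \<Rightarrow> bool" where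
  "closed_class A P C \<longleftrightarrow> (\<forall>i\<in>C. \<forall>j. communicates A P i j \<longrightarrow> j \<in> C)"

definition recurrent_part :: "nat set \<Rightarrow> (nat \<Rightarrow> 'g::finite \<Rightarrow> 'g \<Rightarrow> real) \<Rightarrow> 'g set" where
  "recurrent_part A P = \<Union>{C \<in> comm_classes A P. closed_class A P C}"

definition ikern :: "nat set \<Rightarrow> (nat \<Rightarrow> real) \<Rightarrow> (nat \<Rightarrow> 'g \<Rightarrow> 'g \<Rightarrow> real) \<Rightarrow> 'g \<Rightarrow> (nat \<Rightarrow> 'g) \<Rightarrow> real" where
  "ikern A \<theta> P g w = (\<Sum>\<^sub>\<infinity>k\<in>A. \<theta> k * P k (w k) g)"

definition path_space :: "(int \<Rightarrow> 'g) measure" where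
  "path_space = PiM UNIV (\<lambda>_. count_space UNIV)"

definition past_alg :: "int \<Rightarrow> (int \<Rightarrow> 'g) measure" where
  "past_alg n = sigma UNIV {{x. x m = g} | m g. m < n}"

definition past_of :: "(int \<Rightarrow> 'g) \<Rightarrow> int \<Rightarrow> nat \<Rightarrow> 'g" where
  "past_of x n = (\<lambda>k. x (n - int k))"

text \<open>Laws on S^Z, identified with laws on G^Z supported by S^Z, compatible with the kernel p
 (viewed as a kernel on S): P(X_n = g | X_{n-1}, X_{n-2}, ...) = p(g | X_{n-1}, ...) a.s.
 for all n and all g in S.\<close>
definition compatible :: "'g set \<Rightarrow> ('g \<Rightarrow> (nat \<Rightarrow> 'g) \<Rightarrow> real) \<Rightarrow> (int \<Rightarrow> 'g) measure \<Rightarrow> bool" where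
  "compatible S p \<mu> \<longleftrightarrow>
     prob_space \<mu> \<and> sets \<mu> = sets path_space \<and>
     measure \<mu> {x. \<forall>n. x n \<in> S} = 1 \<and>
     (\<forall>n. \<forall>g\<in>S. AE x in \<mu>.
        real_cond_exp \<mu> (past_alg n) (indicator {y. y n = g}) x = p g (past_of x n))"

definition Gibbs :: "'g set \<Rightarrow> ('g \<Rightarrow> (nat \<Rightarrow> 'g) \<Rightarrow> real) \<Rightarrow> (int \<Rightarrow> 'g) measure set" where
  "Gibbs S p = {\<mu>. compatible S p \<mu>}"

end

theory Submission
  imports Defs
begin

text \<open>If \<mu> is compatible with p, let b(i) be the supremum over m of \<mu>(X_m = i). Conditionally
  on the past, X_n arises from X_(n-k) by a step of P_(k) with probability \<theta>_k, so b is
  subinvariant for the mixture Q = \<Sum>_k \<theta>_k P_(k). No P_(k) leads from R into its complement T,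
  hence b restricted to T is subinvariant for Q restricted to T; since from every state of T the
  chain Q can leave T, this forces b = 0 on T, i.e. \<mu> is carried by R^\<int>. Conversely, for a law
  carried by R^\<int> both sides of the compatibility condition vanish at every g outside R.\<close>

section \<open>Communication and the recurrent part\<close>

definition step_graph :: "nat set \<Rightarrow> (nat \<Rightarrow> 'g::finite \<Rightarrow> 'g \<Rightarrow> real) \<Rightarrow> ('g \<times> 'g) set" where
  "step_graph A P = {(i, j). \<exists>k\<in>A. 0 < P k i j}"

lemma stochastic_nonneg: "stochastic Q \<Longrightarrow> 0 \<le> Q i j"
  by (simp add: stochastic_def)

lemma stochastic_le_1:
  assumes "stochastic Q"
  shows "Q i j \<le> 1"
proof -
  have "Q i j \<le> (\<Sum>j\<in>UNIV. Q i j)"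
    by (rule member_le_sum) (use assms in \<open>auto simp: stochastic_def\<close>)
  then show ?thesis
    using assms by (simp add: stochastic_def)
qed

context
  fixes A :: "nat set" and P :: "nat \<Rightarrow> 'g::finite \<Rightarrow> 'g \<Rightarrow> real"
  assumes stochastic_P: "\<forall>k\<in>A. stochastic (P k)"
begin

lemma wprod_nonneg: "set as \<subseteq> A \<Longrightarrow> 0 \<le> wprod P as i j"
proof (induction as arbitrary: j)
  case (Cons a as)
  then show ?case
    using stochastic_P by (auto simp: mmul_def stochastic_def intro!: sum_nonneg)
qed simp

lemma wprod_pos_imp_step_graph:
  assumes "set as \<subseteq> A" "0 < wprod P as i j"
  shows "(i, j) \<in> (step_graph A P)\<^sup>*"
  using assms
proof (induction as arbitrary: j)
  case Nil
  then have "i = j"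
    by (simp split: if_splits)
  then show ?case
    by simp
next
  case (Cons a as)
  have "0 < (\<Sum>s\<in>UNIV. wprod P as i s * P a s j)"
    using Cons.prems(2) by (simp add: mmul_def)
  then obtain s where "0 < wprod P as i s * P a s j"
    using sum_nonpos[of UNIV "\<lambda>s. wprod P as i s * P a s j"] by (meson not_less)
  moreover have "0 \<le> wprod P as i s" "0 \<le> P a s j"
    using Cons.prems(1) stochastic_P by (simp_all add: wprod_nonneg stochastic_nonneg)
  ultimately have "0 < wprod P as i s" "0 < P a s j"
    by (auto simp: zero_less_mult_iff)
  then have "(i, s) \<in> (step_graph A P)\<^sup>*" "(s, j) \<in> step_graph A P"
    using Cons.IH Cons.prems(1) by (auto simp: step_graph_def)
  then show ?case
    by (rule rtrancl_into_rtrancl)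
qed

lemma step_graph_imp_wprod_pos:
  assumes "(i, j) \<in> (step_graph A P)\<^sup>*"
  shows "\<exists>as. set as \<subseteq> A \<and> 0 < wprod P as i j"
  using assms
proof (induction rule: rtrancl_induct)
  case base
  show ?case by (intro exI[of _ "[]"]) simp
next
  case (step j l)
  then obtain as k where as: "set as \<subseteq> A" "0 < wprod P as i j" and k: "k \<in> A" "0 < P k j l"
    by (auto simp: step_graph_def)
  have "wprod P as i j * P k j l \<le> (\<Sum>s\<in>UNIV. wprod P as i s * P k s l)"
    by (rule member_le_sum)
       (use as k stochastic_P wprod_nonneg in \<open>auto simp: stochastic_def\<close>)
  moreover have "0 < wprod P as i j * P k j l"
    using as k by simp
  ultimately have "0 < wprod P (k # as) i l"
    by (simp add: mmul_def)
  then show ?case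
    using as k by (intro exI[of _ "k # as"]) auto
qed

lemma communicates_iff_step_graph:
  "communicates A P i j \<longleftrightarrow> (i, j) \<in> (step_graph A P)\<^sup>*"
proof
  assume "communicates A P i j"
  then show "(i, j) \<in> (step_graph A P)\<^sup>*"
    unfolding communicates_def using wprod_pos_imp_step_graph by blast
next
  assume "(i, j) \<in> (step_graph A P)\<^sup>*"
  then obtain as where "set as \<subseteq> A" "0 < wprod P as i j"
    using step_graph_imp_wprod_pos by blast
  moreover have "as \<noteq> []" if "i \<noteq> j"
    using that \<open>0 < wprod P as i j\<close> by auto
  ultimately show "communicates A P i j"
    unfolding communicates_def by blast
qed

lemma recurrent_part_closed:
  assumes "i \<in> recurrent_part A P" "(i, j) \<in> (step_graph A P)\<^sup>*"
  shows "j \<in> recurrent_part A P"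
proof -
  obtain C where C: "C \<in> comm_classes A P" "closed_class A P C" "i \<in> C"
    using assms(1) by (auto simp: recurrent_part_def)
  then have "j \<in> C"
    using assms(2) by (auto simp: closed_class_def communicates_iff_step_graph)
  with C show ?thesis
    by (auto simp: recurrent_part_def)
qed

lemma recurrent_part_no_exit:
  assumes "i \<in> recurrent_part A P" "j \<notin> recurrent_part A P" "k \<in> A"
  shows "P k i j = 0"
proof -
  have "(i, j) \<notin> step_graph A P"
    using assms(1,2) recurrent_part_closed by blast
  then show ?thesis
    using assms(3) stochastic_P by (auto simp: step_graph_def stochastic_def less_le)
qed

text \<open>Induction on the size of the forward orbit: if every successor of \<open>i\<close> leads back to \<open>i\<close>,
  the class of \<open>i\<close> is closed; otherwise some successor has a strictly smaller orbit.\<close>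

lemma reaches_recurrent_part: "\<exists>j\<in>recurrent_part A P. (i, j) \<in> (step_graph A P)\<^sup>*"
proof (induction "card ((step_graph A P)\<^sup>* `` {i})" arbitrary: i rule: less_induct)
  case less
  let ?E = "(step_graph A P)\<^sup>*"
  show ?case
  proof (cases "\<forall>l. (i, l) \<in> ?E \<longrightarrow> (l, i) \<in> ?E")
    case True
    define C where "C = {j. intercomm A P i j}"
    have "C \<in> comm_classes A P"
      by (simp add: C_def comm_classes_def)
    moreover have "i \<in> C"
      by (simp add: C_def intercomm_def communicates_def)
    moreover have "closed_class A P C"
      unfolding closed_class_def C_def intercomm_def communicates_iff_step_graph
    proof (intro ballI allI impI)
      fix m l
      assume "m \<in> {j. (i, j) \<in> ?E \<and> (j, i) \<in> ?E}" "(m, l) \<in> ?E"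
      then have "(i, l) \<in> ?E"
        by auto
      with True show "l \<in> {j. (i, j) \<in> ?E \<and> (j, i) \<in> ?E}"
        by auto
    qed
    ultimately show ?thesis
      by (auto simp: recurrent_part_def)
  next
    case False
    then obtain l where l: "(i, l) \<in> ?E" "(l, i) \<notin> ?E"
      by auto
    then have "?E `` {l} \<subset> ?E `` {i}"
      by (auto intro: rtrancl_trans)
    then have "card (?E `` {l}) < card (?E `` {i})"
      by (rule psubset_card_mono[OF finite])
    then obtain j where "j \<in> recurrent_part A P" "(l, j) \<in> ?E"
      using less by blast
    with l show ?thesis
      by (auto intro: rtrancl_trans)
  qed
qed

end

section \<open>Subinvariant vectors of a stochastic matrix\<close>

context
  fixes Q :: "'a::finite \<Rightarrow> 'a \<Rightarrow> real" and b :: "'a \<Rightarrow> real" and T :: "'a set"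
  assumes stochastic_Q: "stochastic Q"
    and b_nonneg: "\<And>i. 0 \<le> b i"
    and b_subinvariant: "\<And>g. g \<in> T \<Longrightarrow> b g \<le> (\<Sum>i\<in>T. b i * Q i g)"
begin

text \<open>Summing the subinvariance inequality over \<open>T\<close> and using that the rows of \<open>Q\<close> restricted
  to \<open>T\<close> have mass at most \<open>1\<close> shows that every inequality involved is an equality.\<close>

lemma subinvariant_tight:
  shows subinvariant_eq: "\<And>g. g \<in> T \<Longrightarrow> b g = (\<Sum>i\<in>T. b i * Q i g)"
    and subinvariant_row_sum_eq_1: "\<And>i. i \<in> T \<Longrightarrow> 0 < b i \<Longrightarrow> (\<Sum>g\<in>T. Q i g) = 1"
proof -
  define r where "r i = (\<Sum>g\<in>T. Q i g)" for i
  have r_le_1: "r i \<le> 1" for i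
  proof -
    have "r i \<le> (\<Sum>g\<in>UNIV. Q i g)"
      unfolding r_def by (rule sum_mono2) (use stochastic_Q in \<open>auto simp: stochastic_def\<close>)
    then show ?thesis
      using stochastic_Q by (simp add: stochastic_def)
  qed
  have swap: "(\<Sum>g\<in>T. \<Sum>i\<in>T. b i * Q i g) = (\<Sum>i\<in>T. b i * r i)"
    unfolding r_def by (subst sum.swap) (simp add: sum_distrib_left)
  have le1: "(\<Sum>g\<in>T. b g) \<le> (\<Sum>i\<in>T. b i * r i)"
    unfolding swap[symmetric] by (rule sum_mono) (rule b_subinvariant)
  have le2: "(\<Sum>i\<in>T. b i * r i) \<le> (\<Sum>i\<in>T. b i)"
    by (rule sum_mono) (use b_nonneg r_le_1 in \<open>auto intro: mult_left_le\<close>)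
  have "(\<Sum>g\<in>T. (\<Sum>i\<in>T. b i * Q i g) - b g) = 0"
    using le1 le2 by (simp add: sum_subtractf swap)
  then have "\<forall>g\<in>T. (\<Sum>i\<in>T. b i * Q i g) - b g = 0"
    by (subst (asm) sum_nonneg_eq_0_iff) (use b_subinvariant in auto)
  then show "\<And>g. g \<in> T \<Longrightarrow> b g = (\<Sum>i\<in>T. b i * Q i g)"
    by simp
  have "(\<Sum>i\<in>T. b i * (1 - r i)) = 0"
    using le1 le2 by (simp add: algebra_simps sum_subtractf)
  then have "\<forall>i\<in>T. b i * (1 - r i) = 0"
    by (subst (asm) sum_nonneg_eq_0_iff) (use b_nonneg r_le_1 in auto)
  then show "\<And>i. i \<in> T \<Longrightarrow> 0 < b i \<Longrightarrow> (\<Sum>g\<in>T. Q i g) = 1"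
    by (auto simp: r_def)
qed

lemma subinvariant_support_step:
  assumes "i \<in> T" "0 < b i" "0 < Q i j"
  shows "j \<in> T \<and> 0 < b j"
proof -
  have "(\<Sum>g\<in>UNIV. Q i g) = (\<Sum>g\<in>T. Q i g) + (\<Sum>g\<in>-T. Q i g)"
    using sum.subset_diff[of T UNIV "Q i"] by (simp add: Compl_eq_Diff_UNIV)
  then have "(\<Sum>g\<in>-T. Q i g) = 0"
    using subinvariant_row_sum_eq_1[OF assms(1,2)] stochastic_Q by (simp add: stochastic_def)
  then have "\<forall>g\<in>-T. Q i g = 0"
    using stochastic_Q by (simp add: sum_nonneg_eq_0_iff stochastic_def)
  then have "j \<in> T"
    using assms(3) by force
  have "b i * Q i j \<le> (\<Sum>l\<in>T. b l * Q l j)"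
    by (rule member_le_sum)
       (use assms(1) b_nonneg stochastic_Q in \<open>auto simp: stochastic_def\<close>)
  also have "\<dots> = b j"
    using subinvariant_eq[OF \<open>j \<in> T\<close>] by simp
  finally have "b i * Q i j \<le> b j" .
  moreover have "0 < b i * Q i j"
    using assms(2,3) by simp
  ultimately show ?thesis
    using \<open>j \<in> T\<close> by simp
qed

text \<open>The support of \<open>b\<close> in \<open>T\<close> is closed under positive transitions, so it cannot
  contain a state from which \<open>Q\<close> leads out of \<open>T\<close>.\<close>

lemma subinvariant_vanishes:
  assumes escape: "\<And>i. i \<in> T \<Longrightarrow> \<exists>j. j \<notin> T \<and> (i, j) \<in> {(i, j). 0 < Q i j}\<^sup>*"
    and "i \<in> T"
  shows "b i = 0"
proof (rule ccontr)
  assume "b i \<noteq> 0"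
  then have "0 < b i"
    using b_nonneg by (simp add: less_le)
  obtain j where "j \<notin> T" and path: "(i, j) \<in> {(i, j). 0 < Q i j}\<^sup>*"
    using escape[OF \<open>i \<in> T\<close>] by blast
  from path have "j \<in> T \<and> 0 < b j"
  proof (induction rule: rtrancl_induct)
    case base
    show ?case
      using \<open>i \<in> T\<close> \<open>0 < b i\<close> ..
  next
    case (step l m)
    then show ?case
      using subinvariant_support_step by blast
  qed
  with \<open>j \<notin> T\<close> show False
    by blast
qed

end

section \<open>The mixture matrix\<close>

text \<open>The weights are extended by zero outside \<open>A\<close>, so that the kernel becomes an ordinary
  series over \<open>\<nat>\<close>.\<close>

definition weighted_step :: "nat set \<Rightarrow> (nat \<Rightarrow> real) \<Rightarrow> (nat \<Rightarrow> 'g \<Rightarrow> 'g \<Rightarrow> real) \<Rightarrow> nat \<Rightarrow> 'g \<Rightarrow> 'g \<Rightarrow> real" where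
  "weighted_step A \<theta> P k i j = (if k \<in> A then \<theta> k * P k i j else 0)"

definition mixture :: "nat set \<Rightarrow> (nat \<Rightarrow> real) \<Rightarrow> (nat \<Rightarrow> 'g \<Rightarrow> 'g \<Rightarrow> real) \<Rightarrow> 'g \<Rightarrow> 'g \<Rightarrow> real" where
  "mixture A \<theta> P i j = (\<Sum>k. weighted_step A \<theta> P k i j)"

locale imitation_kernel =
  fixes A :: "nat set" and \<theta> :: "nat \<Rightarrow> real" and P :: "nat \<Rightarrow> 'g::finite \<Rightarrow> 'g \<Rightarrow> real"
  assumes weights_pos: "\<forall>k\<in>A. 0 < \<theta> k"
    and weights_sum: "(\<theta> has_sum 1) A"
    and stochastic_P: "\<forall>k\<in>A. stochastic (P k)"
begin

lemma extended_weights_sums: "(\<lambda>k. if k \<in> A then \<theta> k else 0) sums 1"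
proof -
  have "((\<lambda>k. if k \<in> A then \<theta> k else 0) has_sum 1) UNIV"
    using weights_sum by (subst has_sum_cong_neutral[where T = A]) auto
  then show ?thesis
    by (rule has_sum_imp_sums)
qed

lemma weighted_step_nonneg: "0 \<le> weighted_step A \<theta> P k i j"
  using weights_pos stochastic_P by (auto simp: weighted_step_def stochastic_def less_imp_le)

lemma summable_weighted_step: "summable (\<lambda>k. weighted_step A \<theta> P k (f k) j)"
proof (rule summable_comparison_test)
  show "summable (\<lambda>k. if k \<in> A then \<theta> k else 0)"
    using extended_weights_sums by (rule sums_summable)
  show "\<exists>N. \<forall>k\<ge>N. norm (weighted_step A \<theta> P k (f k) j) \<le> (if k \<in> A then \<theta> k else 0)"
  proof (intro exI allI impI)
    fix k
    show "norm (weighted_step A \<theta> P k (f k) j) \<le> (if k \<in> A then \<theta> k else 0)"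
      using weights_pos stochastic_P weighted_step_nonneg[of k "f k" j]
      by (auto simp: weighted_step_def stochastic_le_1 intro!: mult_left_le less_imp_le)
  qed
qed

lemma ikern_eq_suminf: "ikern A \<theta> P g w = (\<Sum>k. weighted_step A \<theta> P k (w k) g)"
proof -
  have "ikern A \<theta> P g w = (\<Sum>\<^sub>\<infinity>k. weighted_step A \<theta> P k (w k) g)"
    unfolding ikern_def by (rule infsum_cong_neutral) (auto simp: weighted_step_def)
  also have "\<dots> = (\<Sum>k. weighted_step A \<theta> P k (w k) g)"
    by (intro infsumI sums_nonneg_imp_has_sum summable_sums summable_weighted_step
        weighted_step_nonneg)
  finally show ?thesis .
qed

lemma mixture_nonneg: "0 \<le> mixture A \<theta> P i j"
  unfolding mixture_def by (intro suminf_nonneg summable_weighted_step weighted_step_nonneg)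

lemma stochastic_mixture: "stochastic (mixture A \<theta> P)"
proof -
  have "(\<Sum>j\<in>UNIV. mixture A \<theta> P i j) = 1" for i
  proof -
    have "(\<Sum>j\<in>UNIV. mixture A \<theta> P i j) = (\<Sum>k. \<Sum>j\<in>UNIV. weighted_step A \<theta> P k i j)"
      unfolding mixture_def by (rule suminf_sum[symmetric]) (rule summable_weighted_step)
    also have "(\<lambda>k. \<Sum>j\<in>UNIV. weighted_step A \<theta> P k i j) = (\<lambda>k. if k \<in> A then \<theta> k else 0)"
      using stochastic_P
      by (auto simp: weighted_step_def stochastic_def simp flip: sum_distrib_left)
    finally show ?thesis
      using extended_weights_sums sums_unique by metis
  qed
  then show ?thesis
    by (simp add: stochastic_def mixture_nonneg)
qed

lemma step_graph_imp_mixture_pos: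
  assumes "(i, j) \<in> step_graph A P"
  shows "0 < mixture A \<theta> P i j"
proof -
  obtain k where "k \<in> A" "0 < P k i j"
    using assms by (auto simp: step_graph_def)
  then have "0 < weighted_step A \<theta> P k i j"
    using weights_pos by (simp add: weighted_step_def)
  then show ?thesis
    unfolding mixture_def by (rule suminf_pos2[OF summable_weighted_step weighted_step_nonneg])
qed

lemma weighted_step_no_exit:
  "i \<in> recurrent_part A P \<Longrightarrow> j \<notin> recurrent_part A P \<Longrightarrow> weighted_step A \<theta> P k i j = 0"
  using recurrent_part_no_exit[OF stochastic_P] by (simp add: weighted_step_def)

lemma mixture_no_exit:
  "i \<in> recurrent_part A P \<Longrightarrow> j \<notin> recurrent_part A P \<Longrightarrow> mixture A \<theta> P i j = 0"
  by (simp add: mixture_def weighted_step_no_exit)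

lemma transient_escapes:
  assumes "i \<in> - recurrent_part A P"
  shows "\<exists>j. j \<notin> - recurrent_part A P \<and> (i, j) \<in> {(i, j). 0 < mixture A \<theta> P i j}\<^sup>*"
proof -
  obtain j where "j \<in> recurrent_part A P" "(i, j) \<in> (step_graph A P)\<^sup>*"
    using reaches_recurrent_part[OF stochastic_P] by blast
  moreover have "step_graph A P \<subseteq> {(i, j). 0 < mixture A \<theta> P i j}"
    using step_graph_imp_mixture_pos by blast
  ultimately show ?thesis
    using rtrancl_mono by blast
qed

end

section \<open>Compatible laws\<close>

lemma space_path_space [simp]: "space path_space = UNIV"
  by (simp add: path_space_def space_PiM)

lemma measurable_path_component [measurable]:
  "(\<lambda>x. x m) \<in> measurable path_space (count_space UNIV)"
  unfolding path_space_def by (rule measurable_component_singleton) simp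

lemma path_cylinder_in_sets: "{x. x m = g} \<in> sets path_space"
proof -
  have "(\<lambda>x. x m) -` {g} \<inter> space path_space \<in> sets path_space"
    by (rule measurable_sets[OF measurable_path_component]) simp
  then show ?thesis
    by (simp add: vimage_def)
qed

lemma path_support_in_sets: "{x. \<forall>n. x n \<in> (S :: 'g::finite set)} \<in> sets path_space"
proof -
  have "{x. \<forall>n. x n \<in> S} = (\<Inter>n. \<Union>i\<in>S. {x. x n = i})"
    by auto
  also have "\<dots> \<in> sets path_space"
    by (intro sets.countable_INT' sets.finite_UN) (auto simp: path_cylinder_in_sets)
  finally show ?thesis .
qed

lemma subalgebra_past_alg:
  assumes "sets \<mu> = sets path_space"
  shows "subalgebra \<mu> (past_alg n)"
proof -
  have "{{x. x m = g} | m g. m < n} \<subseteq> sets path_space"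
    using path_cylinder_in_sets by auto
  then have "sigma_sets UNIV {{x. x m = g} | m g. m < n} \<subseteq> sets path_space"
    by (rule sets.sigma_sets_subset') (metis sets.top space_path_space)
  then show ?thesis
    using assms sets_eq_imp_space_eq[OF assms]
    by (simp add: subalgebra_def past_alg_def sets_measure_of)
qed

lemma finite_measure_subalgebra_past_alg:
  assumes "prob_space \<mu>" "sets \<mu> = sets path_space"
  shows "finite_measure_subalgebra \<mu> (past_alg n)"
  using subalgebra_past_alg[OF assms(2)] prob_space.finite_measure[OF assms(1)]
  by (auto simp: finite_measure_subalgebra_def finite_measure_subalgebra_axioms_def)

lemma prob_eq_nn_integral_cond_exp:
  assumes "prob_space \<mu>" "sets \<mu> = sets path_space"
    and "AE x in \<mu>. real_cond_exp \<mu> (past_alg n) (indicator {y. y n = g}) x = q x"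
  shows "ennreal (measure \<mu> {x. x n = g}) = (\<integral>\<^sup>+ x. ennreal (q x) \<partial>\<mu>)"
proof -
  interpret prob_space \<mu>
    by (rule assms(1))
  interpret finite_measure_subalgebra \<mu> "past_alg n"
    using finite_measure_subalgebra_past_alg[OF assms(1,2)] .
  have cylinder: "{y. y n = g} \<in> sets \<mu>"
    using path_cylinder_in_sets assms(2) by simp
  have int: "integrable \<mu> (indicator {y. y n = g} :: _ \<Rightarrow> real)"
    by (rule integrable_real_indicator[OF cylinder]) (simp add: emeasure_eq_measure)
  have nonneg: "AE x in \<mu>. 0 \<le> real_cond_exp \<mu> (past_alg n) (indicator {y. y n = g}) x"
    by (rule real_cond_exp_pos[OF AE_I2 borel_measurable_indicator[OF cylinder]]) simp
  have "(\<integral>\<^sup>+ x. ennreal (q x) \<partial>\<mu>)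
      = (\<integral>\<^sup>+ x. ennreal (real_cond_exp \<mu> (past_alg n) (indicator {y. y n = g}) x) \<partial>\<mu>)"
    by (rule nn_integral_cong_AE) (use assms(3) in auto)
  also have "\<dots> = ennreal (\<integral>x. indicator {y. y n = g} x \<partial>\<mu>)"
    using nonneg
    by (simp add: nn_integral_eq_integral[OF real_cond_exp_int(1)[OF int]] real_cond_exp_int(2)[OF int])
  also have "\<dots> = ennreal (measure \<mu> {x. x n = g})"
    using sets_eq_imp_space_eq[OF assms(2)] by simp
  finally show ?thesis
    by (rule sym)
qed

lemma nn_integral_path_component:
  fixes f :: "'g::finite \<Rightarrow> ennreal"
  assumes "sets \<mu> = sets path_space"
  shows "(\<integral>\<^sup>+ x. f (x m) \<partial>\<mu>) = (\<Sum>i\<in>UNIV. f i * emeasure \<mu> {x. x m = i})"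
proof -
  have cylinder: "{x. x m = i} \<in> sets \<mu>" for i
    using path_cylinder_in_sets assms by simp
  have "f (x m) = (\<Sum>i\<in>UNIV. f i * indicator {y. y m = i} x)" for x
    by (simp add: indicator_def if_distrib sum.delta cong: if_cong)
  then have "(\<integral>\<^sup>+ x. f (x m) \<partial>\<mu>) = (\<integral>\<^sup>+ x. (\<Sum>i\<in>UNIV. f i * indicator {y. y m = i} x) \<partial>\<mu>)"
    by simp
  also have "\<dots> = (\<Sum>i\<in>UNIV. \<integral>\<^sup>+ x. f i * indicator {y. y m = i} x \<partial>\<mu>)"
    using cylinder by (intro nn_integral_sum) auto
  finally show ?thesis
    by (simp add: nn_integral_cmult_indicator cylinder)
qed

context imitation_kernel
begin

lemma marginal_le_mixture:
  assumes "prob_space \<mu>" and sets_\<mu>: "sets \<mu> = sets path_space"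
    and cond_exp: "AE x in \<mu>. real_cond_exp \<mu> (past_alg n) (indicator {y. y n = g}) x
        = ikern A \<theta> P g (past_of x n)"
    and bound: "\<And>m i. measure \<mu> {x. x m = i} \<le> b i"
  shows "measure \<mu> {x. x n = g} \<le> (\<Sum>i\<in>UNIV. b i * mixture A \<theta> P i g)"
proof -
  interpret prob_space \<mu>
    by (rule assms(1))
  have b_nonneg: "0 \<le> b i" for i
    using bound[of 0 i] measure_nonneg[of \<mu>] by (meson order_trans)
  define d where "d k = (\<Sum>i\<in>UNIV. weighted_step A \<theta> P k i g * b i)" for k
  have d_nonneg: "0 \<le> d k" for k
    unfolding d_def by (intro sum_nonneg mult_nonneg_nonneg weighted_step_nonneg b_nonneg)
  have summable_d: "summable d"
    unfolding d_def by (intro summable_sum summable_mult2 summable_weighted_step)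
  have lag_le: "(\<integral>\<^sup>+ x. ennreal (weighted_step A \<theta> P k (x (n - int k)) g) \<partial>\<mu>) \<le> ennreal (d k)" for k
  proof -
    have "(\<integral>\<^sup>+ x. ennreal (weighted_step A \<theta> P k (x (n - int k)) g) \<partial>\<mu>)
        = (\<Sum>i\<in>UNIV. ennreal (weighted_step A \<theta> P k i g) * emeasure \<mu> {x. x (n - int k) = i})"
      by (rule nn_integral_path_component[OF sets_\<mu>])
    also have "\<dots> \<le> (\<Sum>i\<in>UNIV. ennreal (weighted_step A \<theta> P k i g) * ennreal (b i))"
      using bound by (intro sum_mono mult_left_mono) (simp_all add: emeasure_eq_measure ennreal_leI)
    also have "\<dots> = ennreal (d k)"
      by (simp add: d_def ennreal_mult'' weighted_step_nonneg b_nonneg sum_nonneg flip: sum_ennreal)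
    finally show ?thesis .
  qed
  have "ennreal (measure \<mu> {x. x n = g}) = (\<integral>\<^sup>+ x. ennreal (ikern A \<theta> P g (past_of x n)) \<partial>\<mu>)"
    by (rule prob_eq_nn_integral_cond_exp[OF assms(1) sets_\<mu> cond_exp])
  also have "\<dots> = (\<integral>\<^sup>+ x. (\<Sum>k. ennreal (weighted_step A \<theta> P k (x (n - int k)) g)) \<partial>\<mu>)"
    by (simp add: ikern_eq_suminf past_of_def suminf_ennreal2 weighted_step_nonneg
        summable_weighted_step)
  also have "\<dots> = (\<Sum>k. \<integral>\<^sup>+ x. ennreal (weighted_step A \<theta> P k (x (n - int k)) g) \<partial>\<mu>)"
    by (rule nn_integral_suminf) (simp add: measurable_cong_sets[OF sets_\<mu> refl])
  also have "\<dots> \<le> (\<Sum>k. ennreal (d k))"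
    by (intro suminf_le lag_le summableI)
  also have "\<dots> = ennreal (\<Sum>k. d k)"
    by (rule suminf_ennreal2[OF d_nonneg summable_d])
  finally have "measure \<mu> {x. x n = g} \<le> (\<Sum>k. d k)"
    by (simp add: ennreal_le_iff suminf_nonneg[OF summable_d d_nonneg])
  also have "(\<Sum>k. d k) = (\<Sum>i\<in>UNIV. \<Sum>k. weighted_step A \<theta> P k i g * b i)"
    unfolding d_def by (intro suminf_sum summable_mult2 summable_weighted_step)
  also have "\<dots> = (\<Sum>i\<in>UNIV. b i * mixture A \<theta> P i g)"
    unfolding mixture_def
    by (simp add: suminf_mult[OF summable_weighted_step, symmetric] mult.commute)
  finally show ?thesis .
qed

lemma compatible_support_recurrent_part:
  assumes "compatible UNIV (ikern A \<theta> P) \<mu>"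
  shows "measure \<mu> {x. \<forall>n. x n \<in> recurrent_part A P} = 1"
proof -
  let ?R = "recurrent_part A P"
  have "prob_space \<mu>" and sets_\<mu>: "sets \<mu> = sets path_space"
    and cond_exp: "\<And>n g. AE x in \<mu>. real_cond_exp \<mu> (past_alg n) (indicator {y. y n = g}) x
        = ikern A \<theta> P g (past_of x n)"
    using assms by (auto simp: compatible_def)
  interpret prob_space \<mu>
    by fact
  define b where "b i = (SUP m. measure \<mu> {x. x m = i})" for i
  have bound: "measure \<mu> {x. x m = i} \<le> b i" for m i
    unfolding b_def by (rule cSUP_upper) (auto intro: bdd_aboveI[of _ 1])
  have b_nonneg: "0 \<le> b i" for i
    using bound[of 0 i] measure_nonneg[of \<mu>] by (meson order_trans)
  have subinvariant: "b g \<le> (\<Sum>i\<in>-?R. b i * mixture A \<theta> P i g)" if "g \<in> -?R" for g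
  proof -
    have "(\<Sum>i\<in>UNIV. b i * mixture A \<theta> P i g) = (\<Sum>i\<in>-?R. b i * mixture A \<theta> P i g)"
      by (rule sum.mono_neutral_right) (use that in \<open>auto simp: mixture_no_exit\<close>)
    then have "measure \<mu> {x. x m = g} \<le> (\<Sum>i\<in>-?R. b i * mixture A \<theta> P i g)" for m
      using marginal_le_mixture[OF \<open>prob_space \<mu>\<close> sets_\<mu> cond_exp[of m g] bound] by simp
    then show ?thesis
      unfolding b_def[of g] by (intro cSUP_least) auto
  qed
  have b_zero: "b i = 0" if "i \<in> -?R" for i
    using stochastic_mixture b_nonneg subinvariant transient_escapes that
    by (rule subinvariant_vanishes)
  have "AE x in \<mu>. x \<notin> {y. y m = i}" if "i \<in> -?R" for m i
    using bound[of m i] b_zero[OF that] prob_eq_0[of "{y. y m = i}"] sets_\<mu>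
      path_cylinder_in_sets[of m i]
    by (simp add: measure_le_0_iff)
  then have "AE x in \<mu>. \<forall>m. \<forall>i\<in>-?R. x \<notin> {y. y m = i}"
    by (simp add: AE_all_countable AE_finite_all)
  then have "AE x in \<mu>. x \<in> {y. \<forall>m. y m \<in> ?R}"
    by eventually_elim auto
  then show ?thesis
    using prob_eq_1[of "{x. \<forall>n. x n \<in> ?R}"] sets_\<mu> path_support_in_sets[of ?R] by simp
qed

lemma compatible_recurrent_part_imp_cond_exp_outside:
  assumes "compatible (recurrent_part A P) (ikern A \<theta> P) \<mu>" and "g \<notin> recurrent_part A P"
  shows "AE x in \<mu>. real_cond_exp \<mu> (past_alg n) (indicator {y. y n = g}) x
    = ikern A \<theta> P g (past_of x n)"
proof -
  let ?R = "recurrent_part A P"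
  have "prob_space \<mu>" and sets_\<mu>: "sets \<mu> = sets path_space"
    and support: "measure \<mu> {x. \<forall>n. x n \<in> ?R} = 1"
    using assms(1) by (auto simp: compatible_def)
  interpret prob_space \<mu>
    by fact
  interpret finite_measure_subalgebra \<mu> "past_alg n"
    using finite_measure_subalgebra_past_alg[OF \<open>prob_space \<mu>\<close> sets_\<mu>] .
  have in_R: "AE x in \<mu>. \<forall>n. x n \<in> ?R"
    using prob_eq_1[of "{x. \<forall>n. x n \<in> ?R}"] support sets_\<mu> path_support_in_sets[of ?R]
    by simp
  then have "AE x in \<mu>. indicator {y. y n = g} x = (0 :: real)"
    by eventually_elim (use assms(2) in \<open>auto simp: indicator_def\<close>)
  then have "AE x in \<mu>. real_cond_exp \<mu> (past_alg n) (indicator {y. y n = g}) x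
      = real_cond_exp \<mu> (past_alg n) (\<lambda>_. 0) x"
    by (rule real_cond_exp_cong) (use sets_\<mu> path_cylinder_in_sets in auto)
  moreover have "AE x in \<mu>. real_cond_exp \<mu> (past_alg n) (\<lambda>_. 0) x = 0"
    by (rule real_cond_exp_F_meas) auto
  moreover have "AE x in \<mu>. ikern A \<theta> P g (past_of x n) = 0"
    using in_R
  proof eventually_elim
    case (elim x)
    then have "weighted_step A \<theta> P k (x (n - int k)) g = 0" for k
      using assms(2) weighted_step_no_exit by blast
    then show ?case
      by (simp add: ikern_eq_suminf past_of_def)
  qed
  ultimately show ?thesis
    by eventually_elim simp
qed

lemma compatible_UNIV_iff_recurrent_part:
  "compatible UNIV (ikern A \<theta> P) \<mu> \<longleftrightarrow> compatible (recurrent_part A P) (ikern A \<theta> P) \<mu>"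
proof
  assume "compatible UNIV (ikern A \<theta> P) \<mu>"
  with compatible_support_recurrent_part show "compatible (recurrent_part A P) (ikern A \<theta> P) \<mu>"
    by (auto simp: compatible_def)
next
  assume compat: "compatible (recurrent_part A P) (ikern A \<theta> P) \<mu>"
  then have "prob_space \<mu>" "space \<mu> = UNIV"
    using sets_eq_imp_space_eq[of \<mu> path_space] by (auto simp: compatible_def)
  then have "measure \<mu> {x. \<forall>n. x n \<in> UNIV} = 1"
    using prob_space.prob_space[of \<mu>] by simp
  moreover have "AE x in \<mu>. real_cond_exp \<mu> (past_alg n) (indicator {y. y n = g}) x
      = ikern A \<theta> P g (past_of x n)" for n g
    using compat compatible_recurrent_part_imp_cond_exp_outside[OF compat]
    by (cases "g \<in> recurrent_part A P") (auto simp: compatible_def)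
  ultimately show "compatible UNIV (ikern A \<theta> P) \<mu>"
    using compat by (simp add: compatible_def)
qed

end

theorem mainTheorem3:
  fixes A :: "nat set" and \<theta> :: "nat \<Rightarrow> real" and P :: "nat \<Rightarrow> 'g::finite \<Rightarrow> 'g \<Rightarrow> real"
  assumes "A \<subseteq> {1..}"
    and "\<forall>k\<in>A. \<theta> k > 0"
    and "(\<theta> has_sum 1) A"
    and "\<forall>k\<in>A. stochastic (P k)"
  shows "Gibbs UNIV (ikern A \<theta> P) = Gibbs (recurrent_part A P) (ikern A \<theta> P)
    \<and> (\<forall>\<mu>\<in>Gibbs UNIV (ikern A \<theta> P). measure \<mu> {x. \<forall>n. x n \<in> recurrent_part A P} = 1)"
proof -
  interpret imitation_kernel A \<theta> P
    using assms(2-4) by unfold_locales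
  show ?thesis
    unfolding Gibbs_def
    using compatible_UNIV_iff_recurrent_part compatible_support_recurrent_part by auto
qed

end
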